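(* Let $m$ be a positive integer and let $D,D'$ be abstract storage devices with $|\mathcal{S}_D|=|\mathcal{S}_{D'}|=m$ and $D\le D'$. Then $i(D)\ge i(D')$.
   Context: An abstract storage device (ASD) is a pair $D=(\mathcal{S}_D,\mathcal{P}_D)$, $\mathcal{S}_D$ a finite set and $\mathcal{P}_D$ a finite family of partitions of $\mathcal{S}_D$. For a partition $\pi$ of $\mathcal{S}'$ and $\phi:\mathcal{S}\to\mathcal{S}'$, $\pi\circ\phi$ is the partition of $\mathcal{S}$ with $x,y$ in the same block iff $\phi(x),\phi(y)$ are in the same block of $\pi$; $\pi\preceq\rho$ means every block of $\pi$ lies in a block of $\rho$; $\wedge$ is the meet of partitions. $D\le D'$ means there exist $\phi:\mathcal{S}_D\to\mathcal{S}_{D'}$, $\alpha:\mathcal{P}_D\to\mathcal{P}_{D'}$ with $\alpha(\pi)\circ\phi\preceq\pi$ for all $\pi\in\mathcal{P}_D$. $D$ is perfect if $\mathrm{id}_{\mathcal{S}_D}=\{\{s\}:s\in\mathcal{S}_D\}\in\mathcal{P}_D$. $D^{(k)}$ has state space $\mathcal{S}_D$ and partition set $\{\pi_1\wedge\cdots\wedge\pi_k:\pi_i\in\mathcal{P}_D\}$. The perfectness index $i(D)$ is the least integer $k\ge1$ with $D^{(k)}$ perfect, and $i(D)=\infty$ if none exists. *)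

theory Defs
  imports "HOL-Library.Disjoint_Sets" "HOL-Library.Extended_Nat"
begin

text \<open>An abstract storage device: a state space together with a family of partitions
  of it (each partition is a set of blocks).\<close>
type_synonym 'a asd = "'a set \<times> 'a set set set"

definition states :: "'a asd \<Rightarrow> 'a set" where "states D = fst D"
definition parts :: "'a asd \<Rightarrow> 'a set set set" where "parts D = snd D"

definition is_asd :: "'a asd \<Rightarrow> bool" where
  "is_asd D \<longleftrightarrow> finite (states D) \<and> finite (parts D) \<and>
     (\<forall>\<pi>\<in>parts D. partition_on (states D) \<pi>)"

definition pullback :: "'a set \<Rightarrow> 'b set set \<Rightarrow> ('a \<Rightarrow> 'b) \<Rightarrow> 'a set set" where
  "pullback S \<pi> \<phi> = (\<lambda>x. {y\<in>S. \<exists>B\<in>\<pi>. \<phi> x \<in> B \<and> \<phi> y \<in> B}) ` S"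

definition refines :: "'a set set \<Rightarrow> 'a set set \<Rightarrow> bool" where
  "refines \<pi> \<rho> \<longleftrightarrow> (\<forall>B\<in>\<pi>. \<exists>C\<in>\<rho>. B \<subseteq> C)"

definition asd_le :: "'a asd \<Rightarrow> 'b asd \<Rightarrow> bool" where
  "asd_le D D' \<longleftrightarrow> (\<exists>\<phi> \<alpha>. \<phi> ` states D \<subseteq> states D' \<and> (\<forall>\<pi>\<in>parts D. \<alpha> \<pi> \<in> parts D') \<and>
      (\<forall>\<pi>\<in>parts D. refines (pullback (states D) (\<alpha> \<pi>) \<phi>) \<pi>))"

definition perfect :: "'a asd \<Rightarrow> bool" where
  "perfect D \<longleftrightarrow> {{s} | s. s \<in> states D} \<in> parts D"

definition meet :: "'a set set \<Rightarrow> 'a set set \<Rightarrow> 'a set set" where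
  "meet \<pi> \<rho> = {B \<inter> C | B C. B \<in> \<pi> \<and> C \<in> \<rho> \<and> B \<inter> C \<noteq> {}}"

text \<open>kmeets P k: all meets of k partitions from P (k \<ge> 1); kmeets P 0 is unused.\<close>
fun kmeets :: "'a set set set \<Rightarrow> nat \<Rightarrow> 'a set set set" where
  "kmeets P 0 = {}"
| "kmeets P (Suc 0) = P"
| "kmeets P (Suc (Suc k)) = {meet \<pi> \<rho> | \<pi> \<rho>. \<pi> \<in> P \<and> \<rho> \<in> kmeets P (Suc k)}"

definition asd_power :: "'a asd \<Rightarrow> nat \<Rightarrow> 'a asd" where
  "asd_power D k = (states D, kmeets (parts D) k)"

definition perf_index :: "'a asd \<Rightarrow> enat" where
  "perf_index D = (if \<exists>k\<ge>1. perfect (asd_power D k)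
      then enat (LEAST k. k \<ge> 1 \<and> perfect (asd_power D k)) else \<infinity>)"

end

theory Submission
  imports Defs
begin

text \<open>A morphism \<open>(\<phi>, \<alpha>)\<close> witnessing \<open>D \<le> D'\<close> pulls every meet of \<open>k\<close> partitions of \<open>D\<close> back
  from a meet of \<open>k\<close> partitions of \<open>D'\<close> that is at least as fine along \<open>\<phi>\<close>. If \<open>D^(k)\<close> is
  perfect, that meet therefore separates the images of distinct states, so \<open>\<phi>\<close> is injective,
  hence bijective because both state spaces have \<open>m\<close> elements; then the meet separates all
  states of \<open>D'\<close>, i.e. \<open>D'^(k)\<close> is perfect as well.\<close>

definition same_block :: "'a set set \<Rightarrow> 'a \<Rightarrow> 'a \<Rightarrow> bool" where
  "same_block \<pi> x y \<longleftrightarrow> (\<exists>B\<in>\<pi>. x \<in> B \<and> y \<in> B)"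

lemma same_block_meet: "same_block (meet \<pi> \<rho>) x y \<longleftrightarrow> same_block \<pi> x y \<and> same_block \<rho> x y"
  unfolding same_block_def meet_def by blast

lemma same_block_refl: "partition_on S \<pi> \<Longrightarrow> x \<in> S \<Longrightarrow> same_block \<pi> x x"
  using partition_onD1 unfolding same_block_def by blast

lemma partition_on_meet:
  assumes "partition_on S \<pi>" "partition_on S \<rho>"
  shows "partition_on S (meet \<pi> \<rho>)"
proof (rule partition_onI)
  show "\<Union> (meet \<pi> \<rho>) = S"
  proof
    show "\<Union> (meet \<pi> \<rho>) \<subseteq> S"
      using partition_onD1[OF assms(1)] unfolding meet_def by blast
    show "S \<subseteq> \<Union> (meet \<pi> \<rho>)"
    proof
      fix x assume "x \<in> S"
      then obtain B C where "B \<in> \<pi>" "C \<in> \<rho>" "x \<in> B" "x \<in> C"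
        using partition_onD1[OF assms(1)] partition_onD1[OF assms(2)] by blast
      then show "x \<in> \<Union> (meet \<pi> \<rho>)" unfolding meet_def by blast
    qed
  qed
next
  fix p q assume "p \<in> meet \<pi> \<rho>" "q \<in> meet \<pi> \<rho>" "p \<noteq> q"
  then obtain B C B' C' where pq: "p = B \<inter> C" "q = B' \<inter> C'"
      "B \<in> \<pi>" "C \<in> \<rho>" "B' \<in> \<pi>" "C' \<in> \<rho>"
    unfolding meet_def by blast
  have "B = B'" if "z \<in> p" "z \<in> q" for z
    using partition_onD2[OF assms(1)] pq that unfolding pairwise_def disjnt_def by blast
  moreover have "C = C'" if "z \<in> p" "z \<in> q" for z
    using partition_onD2[OF assms(2)] pq that unfolding pairwise_def disjnt_def by blast
  ultimately show "disjnt p q"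
    using pq \<open>p \<noteq> q\<close> unfolding disjnt_def by blast
next
  show "{} \<notin> meet \<pi> \<rho>" unfolding meet_def by blast
qed

lemma partition_on_kmeets:
  assumes "\<forall>\<pi>\<in>P. partition_on S \<pi>" "\<sigma> \<in> kmeets P (Suc k)"
  shows "partition_on S \<sigma>"
  using assms(2)
proof (induction k arbitrary: \<sigma>)
  case 0
  then show ?case using assms(1) by simp
next
  case (Suc k)
  then obtain \<pi> \<rho> where "\<sigma> = meet \<pi> \<rho>" "\<pi> \<in> P" "\<rho> \<in> kmeets P (Suc k)" by auto
  then show ?case using Suc.IH assms(1) partition_on_meet by blast
qed

lemma same_block_pullback:
  assumes "refines (pullback S \<rho> \<phi>) \<pi>" "x \<in> S" "y \<in> S" "same_block \<rho> (\<phi> x) (\<phi> y)"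
  shows "same_block \<pi> x y"
proof -
  let ?B = "{z\<in>S. \<exists>B\<in>\<rho>. \<phi> x \<in> B \<and> \<phi> z \<in> B}"
  have "?B \<in> pullback S \<rho> \<phi>" using assms(2) unfolding pullback_def by blast
  then obtain C where "C \<in> \<pi>" "?B \<subseteq> C" using assms(1) unfolding refines_def by blast
  moreover have "x \<in> ?B" "y \<in> ?B" using assms(2-4) unfolding same_block_def by auto
  ultimately show ?thesis unfolding same_block_def by blast
qed

lemma kmeets_pullback:
  assumes "\<forall>\<pi>\<in>P. \<alpha> \<pi> \<in> P' \<and> refines (pullback S (\<alpha> \<pi>) \<phi>) \<pi>"
    and "\<sigma> \<in> kmeets P (Suc k)"
  shows "\<exists>\<sigma>'\<in>kmeets P' (Suc k).
           \<forall>x\<in>S. \<forall>y\<in>S. same_block \<sigma>' (\<phi> x) (\<phi> y) \<longrightarrow> same_block \<sigma> x y"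
  using assms(2)
proof (induction k arbitrary: \<sigma>)
  case 0
  then show ?case using assms(1) same_block_pullback by fastforce
next
  case (Suc k)
  then obtain \<pi> \<rho> where \<sigma>: "\<sigma> = meet \<pi> \<rho>" "\<pi> \<in> P" "\<rho> \<in> kmeets P (Suc k)" by auto
  then obtain \<rho>' where \<rho>': "\<rho>' \<in> kmeets P' (Suc k)"
      "\<forall>x\<in>S. \<forall>y\<in>S. same_block \<rho>' (\<phi> x) (\<phi> y) \<longrightarrow> same_block \<rho> x y"
    using Suc.IH by blast
  have "meet (\<alpha> \<pi>) \<rho>' \<in> kmeets P' (Suc (Suc k))"
    using \<rho>'(1) assms(1) \<sigma>(2) by auto
  moreover have "same_block \<sigma> x y"
    if "x \<in> S" "y \<in> S" "same_block (meet (\<alpha> \<pi>) \<rho>') (\<phi> x) (\<phi> y)" for x y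
    using that \<rho>'(2) same_block_pullback[of S "\<alpha> \<pi>" \<phi> \<pi> x y] assms(1) \<sigma>
    by (auto simp: same_block_meet)
  ultimately show ?case by blast
qed

lemma partition_on_eq_singletons:
  assumes "partition_on S \<pi>" "\<And>x y. x \<in> S \<Longrightarrow> y \<in> S \<Longrightarrow> same_block \<pi> x y \<Longrightarrow> x = y"
  shows "\<pi> = {{s} | s. s \<in> S}"
proof -
  have singleton: "B = {x}" if "B \<in> \<pi>" "x \<in> B" for B x
    using that assms partition_onD1[OF assms(1)] unfolding same_block_def by blast
  show ?thesis
  proof (intro equalityI subsetI)
    fix B assume "B \<in> \<pi>"
    moreover obtain x where "x \<in> B"
      using \<open>B \<in> \<pi>\<close> partition_onD3[OF assms(1)] by (metis ex_in_conv)
    ultimately show "B \<in> {{s} | s. s \<in> S}"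
      using singleton partition_onD1[OF assms(1)] by blast
  next
    fix B assume "B \<in> {{s} | s. s \<in> S}"
    then obtain x where "B = {x}" "x \<in> S" by blast
    then show "B \<in> \<pi>" using singleton partition_onD1[OF assms(1)] by blast
  qed
qed

lemma perfect_asd_power_iff:
  "perfect (asd_power D k) \<longleftrightarrow> {{s} | s. s \<in> states D} \<in> kmeets (parts D) k"
  unfolding perfect_def asd_power_def states_def parts_def by simp

lemma perfect_asd_power_le:
  assumes "is_asd D" "is_asd D'" "card (states D) = card (states D')" "asd_le D D'"
    and "k \<ge> 1" "perfect (asd_power D k)"
  shows "perfect (asd_power D' k)"
proof -
  obtain k0 where k: "k = Suc k0" using \<open>k \<ge> 1\<close> by (cases k) auto
  let ?S = "states D" and ?S' = "states D'"
  obtain \<phi> \<alpha> where \<phi>: "\<phi> ` ?S \<subseteq> ?S'"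
      and \<alpha>: "\<forall>\<pi>\<in>parts D. \<alpha> \<pi> \<in> parts D' \<and> refines (pullback ?S (\<alpha> \<pi>) \<phi>) \<pi>"
    using \<open>asd_le D D'\<close> unfolding asd_le_def by blast
  have "{{s} | s. s \<in> ?S} \<in> kmeets (parts D) (Suc k0)"
    using \<open>perfect (asd_power D k)\<close> k by (simp add: perfect_asd_power_iff)
  then obtain \<sigma>' where \<sigma>': "\<sigma>' \<in> kmeets (parts D') (Suc k0)"
      and pulled: "\<forall>x\<in>?S. \<forall>y\<in>?S. same_block \<sigma>' (\<phi> x) (\<phi> y) \<longrightarrow> same_block {{s} | s. s \<in> ?S} x y"
    using kmeets_pullback[OF \<alpha>] by blast
  have separates: "x = y" if "x \<in> ?S" "y \<in> ?S" "same_block \<sigma>' (\<phi> x) (\<phi> y)" for x y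
    using pulled that unfolding same_block_def by blast
  have part: "partition_on ?S' \<sigma>'"
    using partition_on_kmeets[OF _ \<sigma>'] \<open>is_asd D'\<close> unfolding is_asd_def by blast
  have "inj_on \<phi> ?S"
  proof (rule inj_onI)
    fix x y assume "x \<in> ?S" "y \<in> ?S" "\<phi> x = \<phi> y"
    moreover have "same_block \<sigma>' (\<phi> x) (\<phi> x)"
      using same_block_refl[OF part] \<phi> \<open>x \<in> ?S\<close> by blast
    ultimately show "x = y" using separates by simp
  qed
  moreover have "finite ?S'" using \<open>is_asd D'\<close> unfolding is_asd_def by blast
  ultimately have onto: "\<phi> ` ?S = ?S'"
    using card_subset_eq[OF _ \<phi>] card_image assms(3) by metis
  have "u = v" if uv: "u \<in> ?S'" "v \<in> ?S'" "same_block \<sigma>' u v" for u v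
  proof -
    obtain x y where "x \<in> ?S" "y \<in> ?S" "u = \<phi> x" "v = \<phi> y"
      using uv(1,2) onto by (metis imageE)
    then show "u = v" using separates uv(3) by metis
  qed
  then have "\<sigma>' = {{s} | s. s \<in> ?S'}" by (rule partition_on_eq_singletons[OF part])
  then show ?thesis using \<sigma>' k by (simp add: perfect_asd_power_iff)
qed

lemma perf_index_mono:
  assumes "\<And>k. k \<ge> 1 \<Longrightarrow> perfect (asd_power D k) \<Longrightarrow> perfect (asd_power D' k)"
  shows "perf_index D' \<le> perf_index D"
proof (cases "\<exists>k\<ge>1. perfect (asd_power D k)")
  case False
  then have "perf_index D = \<infinity>" unfolding perf_index_def by auto
  then show ?thesis by simp
next
  case True
  define k where "k = (LEAST k. k \<ge> 1 \<and> perfect (asd_power D k))"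
  have k: "k \<ge> 1 \<and> perfect (asd_power D k)"
    unfolding k_def using True by (rule LeastI_ex)
  then have k': "k \<ge> 1 \<and> perfect (asd_power D' k)" using assms by blast
  then have "(LEAST k. k \<ge> 1 \<and> perfect (asd_power D' k)) \<le> k" by (rule Least_le)
  with k' True show ?thesis unfolding perf_index_def k_def by auto
qed

theorem proposition4:
  fixes D :: "'a asd" and D' :: "'b asd" and m :: nat
  assumes "m > 0"
    and "is_asd D" and "is_asd D'"
    and "card (states D) = m" and "card (states D') = m"
    and "asd_le D D'"
  shows "perf_index D \<ge> perf_index D'"
  using perfect_asd_power_le[OF assms(2,3) _ assms(6)] assms(4,5)
  by (intro perf_index_mono) simp

end
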